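(* Let $G$ be a finite group. The graph $\mathcal{P}^*(G)/\mathtt{N}$ is a tame and pseudo-covering quotient of $\mathcal{P}^*(G)$. In particular $\mathcal{P}^*(G)$ and $\mathcal{P}^*(G)/\mathtt{N}$ have the same number of connected components.
   Context: The power graph $\mathcal{P}(G)$ has vertex set $G$, distinct $x,y$ adjacent iff one is a positive integer power of the other; $\mathcal{P}^*(G)$ is its subgraph induced on $G\setminus\{1\}$; graphs carry a loop at each vertex. $x\mathtt{N}y$ iff $x,y$ have the same closed neighbourhood in $\mathcal{P}(G)$. For a graph $\Gamma$ and equivalence $\sim$ on its vertices, $\Gamma/\sim$ has vertex set the classes, classes joined iff some representatives are joined. The quotient is tame (resp. pseudo-covering) if the projection $x\mapsto[x]$ is: tame means $[x]=[y]$ implies $x,y$ are joined by a path in $\Gamma$; pseudo-covering means surjective and locally strong, i.e. whenever $\{[x_1],[x_2]\}$ is an edge, every $\tilde x_1\in[x_1]$ is adjacent (or equal) to some $\tilde x_2\in[x_2]$. *)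

theory Defs
  imports "HOL-Algebra.Group"
begin

definition graph_rel :: "'a set \<Rightarrow> ('a \<Rightarrow> 'a \<Rightarrow> bool) \<Rightarrow> ('a \<times> 'a) set" where
  "graph_rel V E = {(x, y). x \<in> V \<and> y \<in> V \<and> (E x y \<or> x = y)}"

definition connected_by_path :: "'a set \<Rightarrow> ('a \<Rightarrow> 'a \<Rightarrow> bool) \<Rightarrow> 'a \<Rightarrow> 'a \<Rightarrow> bool" where
  "connected_by_path V E x y \<longleftrightarrow> x \<in> V \<and> y \<in> V \<and> (x, y) \<in> (graph_rel V E)\<^sup>*"

definition components :: "'a set \<Rightarrow> ('a \<Rightarrow> 'a \<Rightarrow> bool) \<Rightarrow> 'a set set" where
  "components V E = V // {(x, y). connected_by_path V E x y}"

text \<open>Quotient graph by an equivalence R on V: vertices are the classes V // R,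
  classes joined iff some representatives are joined.\<close>
definition quot_edge :: "('a \<Rightarrow> 'a \<Rightarrow> bool) \<Rightarrow> 'a set \<Rightarrow> 'a set \<Rightarrow> bool" where
  "quot_edge E A B \<longleftrightarrow> (\<exists>a\<in>A. \<exists>b\<in>B. E a b \<or> a = b)"

definition tame_quotient :: "'a set \<Rightarrow> ('a \<Rightarrow> 'a \<Rightarrow> bool) \<Rightarrow> ('a \<times> 'a) set \<Rightarrow> bool" where
  "tame_quotient V E R \<longleftrightarrow>
     (\<forall>x\<in>V. \<forall>y\<in>V. R `` {x} = R `` {y} \<longrightarrow> connected_by_path V E x y)"

definition pseudo_covering_quotient :: "'a set \<Rightarrow> ('a \<Rightarrow> 'a \<Rightarrow> bool) \<Rightarrow> ('a \<times> 'a) set \<Rightarrow> bool" where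
  "pseudo_covering_quotient V E R \<longleftrightarrow>
     (\<lambda>x. R `` {x}) ` V = V // R \<and>
     (\<forall>x1\<in>V. \<forall>x2\<in>V. quot_edge E (R `` {x1}) (R `` {x2}) \<longrightarrow>
        (\<forall>y1\<in>R `` {x1}. \<exists>y2\<in>R `` {x2}. E y1 y2 \<or> y1 = y2))"

definition power_adj :: "('a, 'b) monoid_scheme \<Rightarrow> 'a \<Rightarrow> 'a \<Rightarrow> bool" where
  "power_adj G x y \<longleftrightarrow> x \<in> carrier G \<and> y \<in> carrier G \<and>
     (\<exists>n::nat. n > 0 \<and> (y = x [^]\<^bsub>G\<^esub> n \<or> x = y [^]\<^bsub>G\<^esub> n))"

definition power_nbhd :: "('a, 'b) monoid_scheme \<Rightarrow> 'a \<Rightarrow> 'a set" where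
  "power_nbhd G x = {y \<in> carrier G. power_adj G x y}"

definition pstar_vertices :: "('a, 'b) monoid_scheme \<Rightarrow> 'a set" where
  "pstar_vertices G = carrier G - {\<one>\<^bsub>G\<^esub>}"

definition N_rel :: "('a, 'b) monoid_scheme \<Rightarrow> ('a \<times> 'a) set" where
  "N_rel G = {(x, y). x \<in> pstar_vertices G \<and> y \<in> pstar_vertices G \<and>
                      power_nbhd G x = power_nbhd G y}"

end

theory Submission
  imports Defs
begin

text \<open>Two vertices of P*(G) with the same closed neighbourhood are adjacent and have the same
  neighbours; for any graph and any equivalence with these two properties the projection onto the
  quotient is tame and pseudo-covering. A tame projection identifies only vertices that are already
  connected, and every edge of the quotient lifts to a path between any two representatives, so
  two vertices are connected iff their classes are; hence the projection induces a bijection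
  between the components of the graph and those of the quotient.\<close>

lemma connected_by_path_trans [trans]:
  "connected_by_path V E x y \<Longrightarrow> connected_by_path V E y z \<Longrightarrow> connected_by_path V E x z"
  unfolding connected_by_path_def by (meson rtrancl_trans)

lemma connected_by_path_if_adjacent:
  "x \<in> V \<Longrightarrow> y \<in> V \<Longrightarrow> E x y \<or> x = y \<Longrightarrow> connected_by_path V E x y"
  unfolding connected_by_path_def graph_rel_def by auto

lemma connected_by_path_sym:
  assumes "symp E" and "connected_by_path V E x y"
  shows "connected_by_path V E y x"
proof -
  have "sym (graph_rel V E)"
    using assms(1) by (auto intro!: symI simp: graph_rel_def dest: sympD)
  then show ?thesis
    using assms(2) unfolding connected_by_path_def by (meson sym_rtrancl symD)
qed

lemma equiv_connected_by_path:
  assumes "symp E"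
  shows "equiv V {(x, y). connected_by_path V E x y}"
proof (rule equivI)
  show "sym {(x, y). connected_by_path V E x y}"
    using connected_by_path_sym[OF assms] by (auto intro: symI)
  show "trans {(x, y). connected_by_path V E x y}"
    using connected_by_path_trans by (fastforce intro: transI)
qed (auto simp: refl_on_def connected_by_path_def)

lemma symp_quot_edge: "symp E \<Longrightarrow> symp (quot_edge E)"
  unfolding quot_edge_def by (auto intro!: sympI dest: sympD)

lemma connected_by_path_quotient:
  assumes "equiv V R" and "connected_by_path V E x y"
  shows "connected_by_path (V // R) (quot_edge E) (R `` {x}) (R `` {y})"
proof -
  have "x \<in> V" and "(x, y) \<in> (graph_rel V E)\<^sup>*"
    using assms(2) by (auto simp: connected_by_path_def)
  from this(2) show ?thesis
  proof (induction rule: rtrancl_induct)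
    case base
    show ?case using \<open>x \<in> V\<close> by (intro connected_by_path_if_adjacent quotientI) simp_all
  next
    case (step z w)
    then have "z \<in> V" "w \<in> V" "E z w \<or> z = w" by (auto simp: graph_rel_def)
    then have "quot_edge E (R `` {z}) (R `` {w})"
      unfolding quot_edge_def using equiv_class_self[OF assms(1)] by blast
    then have "connected_by_path (V // R) (quot_edge E) (R `` {z}) (R `` {w})"
      using \<open>z \<in> V\<close> \<open>w \<in> V\<close> by (intro connected_by_path_if_adjacent quotientI) simp_all
    with step.IH show ?case by (rule connected_by_path_trans)
  qed
qed

lemma connected_by_path_if_same_class:
  assumes "equiv V R" and "tame_quotient V E R" and "X \<in> V // R" and "a \<in> X" and "b \<in> X"
  shows "connected_by_path V E a b"
proof -
  have "(a, b) \<in> R" using assms(1,3-5) by (simp add: in_quotient_imp_in_rel)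
  then have "a \<in> V" "b \<in> V" "R `` {a} = R `` {b}"
    using equiv_class_eq_iff[OF assms(1)] by blast+
  with assms(2) show ?thesis
    unfolding tame_quotient_def by blast
qed

lemma connected_by_path_if_quot_edge:
  assumes "equiv V R" and "tame_quotient V E R"
    and "X \<in> V // R" and "Y \<in> V // R" and "quot_edge E X Y"
    and "a \<in> X" and "b \<in> Y"
  shows "connected_by_path V E a b"
proof -
  obtain a' b' where "a' \<in> X" "b' \<in> Y" "E a' b' \<or> a' = b'"
    using assms(5) by (auto simp: quot_edge_def)
  have "connected_by_path V E a a'"
    using assms(1-3,6) \<open>a' \<in> X\<close> by (rule connected_by_path_if_same_class)
  also have "connected_by_path V E a' b'"
  proof (rule connected_by_path_if_adjacent)
    show "a' \<in> V" "b' \<in> V"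
      using assms(1,3,4) \<open>a' \<in> X\<close> \<open>b' \<in> Y\<close> in_quotient_imp_subset by blast+
  qed fact
  also have "connected_by_path V E b' b"
    using assms(1,2,4) \<open>b' \<in> Y\<close> assms(7) by (rule connected_by_path_if_same_class)
  finally show ?thesis .
qed

lemma connected_by_path_of_quotient:
  assumes "equiv V R" and "tame_quotient V E R" and "x \<in> V" and "y \<in> V"
    and "connected_by_path (V // R) (quot_edge E) (R `` {x}) (R `` {y})"
  shows "connected_by_path V E x y"
proof -
  have "(R `` {x}, R `` {y}) \<in> (graph_rel (V // R) (quot_edge E))\<^sup>*"
    using assms(5) by (simp add: connected_by_path_def)
  then have "\<forall>b \<in> R `` {y}. connected_by_path V E x b"
  proof (induction rule: rtrancl_induct)
    case base
    show ?case
    proof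
      fix b assume "b \<in> R `` {x}"
      with equiv_class_self[OF assms(1,3)] show "connected_by_path V E x b"
        by (rule connected_by_path_if_same_class[OF assms(1,2) quotientI[OF assms(3)]])
    qed
  next
    case (step X Y)
    from step.hyps(2) have XY: "X \<in> V // R" "Y \<in> V // R" and "quot_edge E X Y \<or> X = Y"
      by (auto simp: graph_rel_def)
    obtain a where "a \<in> X"
      using XY(1) assms(1) in_quotient_imp_non_empty by blast
    with \<open>quot_edge E X Y \<or> X = Y\<close> have "quot_edge E X Y"
      unfolding quot_edge_def by blast
    show ?case
    proof
      fix b assume "b \<in> Y"
      have "connected_by_path V E x a"
        using step.IH \<open>a \<in> X\<close> by blast
      also have "connected_by_path V E a b"
        using assms(1,2) XY \<open>quot_edge E X Y\<close> \<open>a \<in> X\<close> \<open>b \<in> Y\<close>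
        by (rule connected_by_path_if_quot_edge)
      finally show "connected_by_path V E x b" .
    qed
  qed
  with equiv_class_self[OF assms(1,4)] show ?thesis by blast
qed

lemma connected_by_path_quotient_iff:
  assumes "equiv V R" and "tame_quotient V E R" and "x \<in> V" and "y \<in> V"
  shows "connected_by_path (V // R) (quot_edge E) (R `` {x}) (R `` {y})
    \<longleftrightarrow> connected_by_path V E x y"
  using connected_by_path_of_quotient[OF assms] connected_by_path_quotient[OF assms(1), of E x y] ..

lemma bij_betw_image_quotients:
  assumes "equiv A r" and "equiv B s" and "f ` A = B"
    and "\<And>x y. x \<in> A \<Longrightarrow> y \<in> A \<Longrightarrow> (f x, f y) \<in> s \<longleftrightarrow> (x, y) \<in> r"
  shows "bij_betw (image f) (A // r) (B // s)"
proof -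
  have class_image: "f ` (r `` {x}) = s `` {f x}" if "x \<in> A" for x
  proof
    show "f ` (r `` {x}) \<subseteq> s `` {f x}"
    proof (rule image_subsetI)
      fix y assume "y \<in> r `` {x}"
      then have "(x, y) \<in> r" "y \<in> A" using equiv_type[OF assms(1)] by blast+
      then show "f y \<in> s `` {f x}" using assms(4) that by simp
    qed
    show "s `` {f x} \<subseteq> f ` (r `` {x})"
    proof
      fix z assume "z \<in> s `` {f x}"
      moreover from this obtain y where "y \<in> A" "z = f y"
        using assms(2,3) equiv_type by blast
      ultimately show "z \<in> f ` (r `` {x})" using assms(4) that by auto
    qed
  qed
  show ?thesis
  proof (rule bij_betw_imageI)
    show "inj_on (image f) (A // r)"
    proof (rule inj_onI)
      fix X Y assume "X \<in> A // r" "Y \<in> A // r" and "f ` X = f ` Y"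
      obtain x where X: "X = r `` {x}" and "x \<in> A"
        using \<open>X \<in> A // r\<close> by (rule quotientE)
      obtain y where Y: "Y = r `` {y}" and "y \<in> A"
        using \<open>Y \<in> A // r\<close> by (rule quotientE)
      have "s `` {f x} = s `` {f y}"
        using \<open>f ` X = f ` Y\<close> X Y class_image \<open>x \<in> A\<close> \<open>y \<in> A\<close> by simp
      moreover have "f x \<in> B" "f y \<in> B"
        using assms(3) \<open>x \<in> A\<close> \<open>y \<in> A\<close> by blast+
      ultimately have "(f x, f y) \<in> s"
        using eq_equiv_class_iff[OF assms(2)] by blast
      then show "X = Y"
        using assms(1,4) \<open>x \<in> A\<close> \<open>y \<in> A\<close> X Y by (simp add: equiv_class_eq)
    qed
    show "image f ` (A // r) = B // s"
      using assms(3) class_image unfolding quotient_def by auto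
  qed
qed

lemma card_components_tame_quotient:
  assumes "equiv V R" and "symp E" and "tame_quotient V E R"
  shows "card (components V E) = card (components (V // R) (quot_edge E))"
proof -
  have "bij_betw (image (\<lambda>x. R `` {x})) (components V E) (components (V // R) (quot_edge E))"
    unfolding components_def
  proof (rule bij_betw_image_quotients)
    show "equiv V {(x, y). connected_by_path V E x y}"
      using assms(2) by (rule equiv_connected_by_path)
    show "equiv (V // R) {(X, Y). connected_by_path (V // R) (quot_edge E) X Y}"
      using assms(2) by (intro equiv_connected_by_path symp_quot_edge)
    show "(\<lambda>x. R `` {x}) ` V = V // R"
      unfolding quotient_def by auto
  qed (simp add: connected_by_path_quotient_iff[OF assms(1,3)])
  then show ?thesis by (rule bij_betw_same_card)
qed

lemma tame_quotient_if_same_closed_nbhd: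
  assumes "equiv V R"
    and same_nbhd: "\<And>x y z. (x, y) \<in> R \<Longrightarrow> z \<in> V \<Longrightarrow> E x z \<or> x = z \<Longrightarrow> E y z \<or> y = z"
  shows "tame_quotient V E R"
  unfolding tame_quotient_def
proof (intro ballI impI)
  fix x y assume "x \<in> V" "y \<in> V" "R `` {x} = R `` {y}"
  then have "(y, x) \<in> R" using assms(1) by (metis eq_equiv_class_iff)
  then have "E x y \<or> x = y" using \<open>y \<in> V\<close> by (rule same_nbhd) simp
  with \<open>x \<in> V\<close> \<open>y \<in> V\<close> show "connected_by_path V E x y"
    by (rule connected_by_path_if_adjacent)
qed

lemma pseudo_covering_quotient_if_same_closed_nbhd:
  assumes "equiv V R"
    and same_nbhd: "\<And>x y z. (x, y) \<in> R \<Longrightarrow> z \<in> V \<Longrightarrow> E x z \<or> x = z \<Longrightarrow> E y z \<or> y = z"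
  shows "pseudo_covering_quotient V E R"
  unfolding pseudo_covering_quotient_def
proof (intro conjI ballI impI)
  show "(\<lambda>x. R `` {x}) ` V = V // R"
    unfolding quotient_def by auto
next
  fix x1 x2 y1
  assume "quot_edge E (R `` {x1}) (R `` {x2})" and "y1 \<in> R `` {x1}"
  then obtain a b where "(x1, a) \<in> R" "b \<in> R `` {x2}" "E a b \<or> a = b"
    by (auto simp: quot_edge_def)
  have "(a, y1) \<in> R"
    using \<open>y1 \<in> R `` {x1}\<close> equiv_class_eq[OF assms(1) \<open>(x1, a) \<in> R\<close>] by simp
  moreover have "b \<in> V"
    using \<open>b \<in> R `` {x2}\<close> assms(1) equiv_type by blast
  ultimately have "E y1 b \<or> y1 = b"
    using \<open>E a b \<or> a = b\<close> by (rule same_nbhd)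
  with \<open>b \<in> R `` {x2}\<close> show "\<exists>y2 \<in> R `` {x2}. E y1 y2 \<or> y1 = y2" by blast
qed

lemma symp_power_adj: "symp (power_adj G)"
  unfolding power_adj_def by (auto intro: sympI)

lemma power_adj_refl:
  assumes "group G" and "x \<in> carrier G"
  shows "power_adj G x x"
proof -
  have "x [^]\<^bsub>G\<^esub> (1::nat) = x"
    using assms by (simp add: group.is_monoid)
  then show ?thesis
    unfolding power_adj_def using assms(2) by (metis zero_less_one)
qed

lemma equiv_N_rel: "equiv (pstar_vertices G) (N_rel G)"
  unfolding equiv_def refl_on_def sym_def trans_def N_rel_def by auto

lemma N_rel_same_closed_nbhd:
  assumes "group G" and "(x, y) \<in> N_rel G" and "z \<in> pstar_vertices G"
    and "power_adj G x z \<or> x = z"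
  shows "power_adj G y z \<or> y = z"
proof -
  have "z \<in> carrier G" using assms(3) by (simp add: pstar_vertices_def)
  then have "z \<in> power_nbhd G x"
    using assms(1,4) power_adj_refl by (auto simp: power_nbhd_def)
  also have "power_nbhd G x = power_nbhd G y"
    using assms(2) by (simp add: N_rel_def)
  finally show ?thesis by (simp add: power_nbhd_def)
qed

theorem mainTheorem18:
  fixes G :: "('a, 'b) monoid_scheme"
  assumes "group G" and "finite (carrier G)"
  shows "tame_quotient (pstar_vertices G) (power_adj G) (N_rel G)
       \<and> pseudo_covering_quotient (pstar_vertices G) (power_adj G) (N_rel G)
       \<and> card (components (pstar_vertices G) (power_adj G))
         = card (components (pstar_vertices G // N_rel G) (quot_edge (power_adj G)))"
proof -
  note same_nbhd = N_rel_same_closed_nbhd[OF assms(1)]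
  have tame: "tame_quotient (pstar_vertices G) (power_adj G) (N_rel G)"
    using equiv_N_rel same_nbhd by (rule tame_quotient_if_same_closed_nbhd)
  moreover have "pseudo_covering_quotient (pstar_vertices G) (power_adj G) (N_rel G)"
    using equiv_N_rel same_nbhd by (rule pseudo_covering_quotient_if_same_closed_nbhd)
  moreover have "card (components (pstar_vertices G) (power_adj G))
      = card (components (pstar_vertices G // N_rel G) (quot_edge (power_adj G)))"
    using equiv_N_rel symp_power_adj tame by (rule card_components_tame_quotient)
  ultimately show ?thesis by blast
qed

end
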